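(* Let $r\ge0$, $p\in\mathcal{P}_r$, and let $\mathcal{S}\subseteq\mathcal{HC}^*(p)$ be a subset with exactly $\kappa_p$ elements. Then there exists a cycle structure set $\sigma$ for $p$ such that each pair in $\sigma$ contains exactly one element of $\mathcal{S}$.
   Context: A partition $p=(p_1\ge\dots\ge p_k>0)$ is identified with its Young diagram $Y_p$ (rows numbered from the top, columns from the left, starting at $1$); $s_{ij}$ denotes the square in row $i$, column $j$ (possibly outside $Y_p$). Rank: repeatedly removing from a Young diagram a domino (two adjacent squares) so that a Young diagram remains ends at the staircase $(r,r-1,\dots,1)$ for a unique $r\ge0$; $r$ is the rank of $p$ and $\mathcal{P}_r$ is the set of partitions of rank $r$. For $p\in\mathcal{P}_r$: $\mathcal{HC}(p)$ is the set of squares $s_{ij}$ with $i+j\equiv r\pmod2$, $i+j>r+1$, such that adding $s_{ij}$ to $Y_p$ or removing $s_{ij}$ from $Y_p$ yields a Young diagram; $\mathcal{C}(p)$ (resp. $\mathcal{H}(p)$) consists of those with $i$ odd (resp. even). $\mathcal{HC}^*(p),\mathcal{C}^*(p),\mathcal{H}^*(p)$ are defined the same way with $i+j>r+2$ in place of $i+j>r+1$. A square of $\mathcal{HC}(p)$ is filled if it lies in $Y_p$. $\gamma_p$ is the number of squares $s_{ij}\in Y_p$ with $i+j=r+2$; $\kappa_p$ is the number of filled squares of $\mathcal{HC}(p)$. A square $s_{mn}$ lies between $s_{ij}$ and $s_{kl}$ iff $m$ is between $i$ and $k$ and $n$ between $j$ and $l$ (inclusive). A cycle structure set for $p$ is a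 set $\sigma$ of pairwise disjoint unordered pairs $\{a,b\}$ with $a\in\mathcal{H}^*(p)$, $b\in\mathcal{C}^*(p)$ such that (1) exactly $\gamma_p$ squares of $\mathcal{HC}^*(p)$ lie in no pair of $\sigma$, and (2) for every $\{a,b\}\in\sigma$, every square $c\in\mathcal{HC}^*(p)$ lying between $a$ and $b$ is paired in $\sigma$ with another square lying between $a$ and $b$. *)

theory Defs
  imports Main
begin

type_synonym square = "nat \<times> nat"  (* (row i, column j), both starting at 1 *)

definition is_partition :: "nat list \<Rightarrow> bool" where
  "is_partition p \<longleftrightarrow> sorted_wrt (\<ge>) p \<and> (\<forall>x\<in>set p. 0 < x)"

definition Y :: "nat list \<Rightarrow> square set" where
  "Y p = {(i, j). 1 \<le> i \<and> i \<le> length p \<and> 1 \<le> j \<and> j \<le> p ! (i - 1)}"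

definition young :: "square set \<Rightarrow> bool" where
  "young D \<longleftrightarrow> finite D \<and> (\<forall>(i, j)\<in>D. 1 \<le> i \<and> 1 \<le> j) \<and>
     (\<forall>i j i' j'. (i, j) \<in> D \<and> 1 \<le> i' \<and> i' \<le> i \<and> 1 \<le> j' \<and> j' \<le> j \<longrightarrow> (i', j') \<in> D)"

definition adjacent :: "square \<Rightarrow> square \<Rightarrow> bool" where
  "adjacent a b \<longleftrightarrow>
     (fst a = fst b \<and> (snd a = snd b + 1 \<or> snd b = snd a + 1)) \<or>
     (snd a = snd b \<and> (fst a = fst b + 1 \<or> fst b = fst a + 1))"

definition domino_step :: "square set \<Rightarrow> square set \<Rightarrow> bool" where
  "domino_step D D' \<longleftrightarrow>
     (\<exists>a b. a \<in> D \<and> b \<in> D \<and> adjacent a b \<and> D' = D - {a, b} \<and> young D')"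

definition staircase :: "nat \<Rightarrow> square set" where
  "staircase r = {(i, j). 1 \<le> i \<and> 1 \<le> j \<and> i + j \<le> r + 1}"

definition in_P :: "nat \<Rightarrow> nat list \<Rightarrow> bool" where
  "in_P r p \<longleftrightarrow> is_partition p \<and> domino_step\<^sup>*\<^sup>* (Y p) (staircase r)"

definition addrem :: "nat list \<Rightarrow> square \<Rightarrow> bool" where
  "addrem p s \<longleftrightarrow> (s \<notin> Y p \<and> young (insert s (Y p))) \<or> (s \<in> Y p \<and> young (Y p - {s}))"

definition HC :: "nat \<Rightarrow> nat list \<Rightarrow> square set" where
  "HC r p = {(i, j). 1 \<le> i \<and> 1 \<le> j \<and> (i + j) mod 2 = r mod 2 \<and> i + j > r + 1 \<and> addrem p (i, j)}"

definition HCs :: "nat \<Rightarrow> nat list \<Rightarrow> square set" where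
  "HCs r p = {(i, j). 1 \<le> i \<and> 1 \<le> j \<and> (i + j) mod 2 = r mod 2 \<and> i + j > r + 2 \<and> addrem p (i, j)}"

definition Cs :: "nat \<Rightarrow> nat list \<Rightarrow> square set" where
  "Cs r p = {s \<in> HCs r p. odd (fst s)}"

definition Hs :: "nat \<Rightarrow> nat list \<Rightarrow> square set" where
  "Hs r p = {s \<in> HCs r p. even (fst s)}"

definition gamma :: "nat \<Rightarrow> nat list \<Rightarrow> nat" where
  "gamma r p = card {(i, j). (i, j) \<in> Y p \<and> i + j = r + 2}"

definition kappa :: "nat \<Rightarrow> nat list \<Rightarrow> nat" where
  "kappa r p = card (HC r p \<inter> Y p)"

definition between :: "square \<Rightarrow> square \<Rightarrow> square \<Rightarrow> bool" where
  "between c a b \<longleftrightarrow>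
     min (fst a) (fst b) \<le> fst c \<and> fst c \<le> max (fst a) (fst b) \<and>
     min (snd a) (snd b) \<le> snd c \<and> snd c \<le> max (snd a) (snd b)"

definition cycle_structure_set :: "nat \<Rightarrow> nat list \<Rightarrow> square set set \<Rightarrow> bool" where
  "cycle_structure_set r p \<sigma> \<longleftrightarrow>
     (\<forall>P\<in>\<sigma>. \<exists>a b. P = {a, b} \<and> a \<in> Hs r p \<and> b \<in> Cs r p) \<and>
     (\<forall>P\<in>\<sigma>. \<forall>Q\<in>\<sigma>. P \<noteq> Q \<longrightarrow> P \<inter> Q = {}) \<and>
     card (HCs r p - \<Union>\<sigma>) = gamma r p \<and>
     (\<forall>a b. {a, b} \<in> \<sigma> \<longrightarrow>
        (\<forall>c\<in>HCs r p. between c a b \<longrightarrow>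
           (\<exists>d. d \<noteq> c \<and> {c, d} \<in> \<sigma> \<and> between d a b)))"

end

theory Submission
  imports Defs
begin

text \<open>
  The squares of \<open>HC(p)\<close> are the addable and removable squares of \<open>Y\<^sub>p\<close> whose
  coordinate sum has the parity of \<open>r\<close>. Removing a domino does not change the number of such
  addable squares minus the number of such removable ones, which is \<open>r + 1\<close> on the staircase;
  hence \<open>HC*(p)\<close> has \<open>\<gamma>\<^sub>p + 2\<kappa>\<^sub>p\<close> elements. If \<open>\<kappa>\<^sub>p > 0\<close>, the domino
  structure also forces the diagonal \<open>i + j = r + 2\<close> into \<open>Y\<^sub>p\<close>; then \<open>HC*(p) = HC(p)\<close>
  has at most one square per row, its columns decrease down the rows, and consecutive rows differ
  by an odd number. Repeatedly pairing two consecutive squares of which exactly one lies in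
  \<open>S\<close> yields a non-crossing matching whose pairs join an even (\<open>H\<close>) and an odd (\<open>C\<close>) row,
  which is a cycle structure set.
\<close>

section \<open>Young diagrams\<close>

definition addable :: "square set \<Rightarrow> square \<Rightarrow> bool" where
  "addable D c \<longleftrightarrow> c \<notin> D \<and> young (insert c D)"

definition removable :: "square set \<Rightarrow> square \<Rightarrow> bool" where
  "removable D c \<longleftrightarrow> c \<in> D \<and> young (D - {c})"

definition corner :: "square set \<Rightarrow> square \<Rightarrow> bool" where
  "corner D c \<longleftrightarrow> addable D c \<or> removable D c"

lemma addrem_iff: "addrem p c \<longleftrightarrow> addable (Y p) c \<or> removable (Y p) c"
  by (auto simp: addrem_def addable_def removable_def)

lemma young_finite: "young D \<Longrightarrow> finite D"
  by (simp add: young_def)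

lemma young_pos: "young D \<Longrightarrow> (i, j) \<in> D \<Longrightarrow> 1 \<le> i \<and> 1 \<le> j"
  unfolding young_def by blast

lemma young_down:
  "young D \<Longrightarrow> (i, j) \<in> D \<Longrightarrow> 1 \<le> i' \<Longrightarrow> i' \<le> i \<Longrightarrow> 1 \<le> j' \<Longrightarrow> j' \<le> j \<Longrightarrow> (i', j') \<in> D"
  unfolding young_def by blast

lemma young_iff_local:
  "young D \<longleftrightarrow> finite D \<and>
     (\<forall>i j. (i, j) \<in> D \<longrightarrow> 1 \<le> i \<and> 1 \<le> j \<and> (i = 1 \<or> (i - 1, j) \<in> D) \<and> (j = 1 \<or> (i, j - 1) \<in> D))"
    (is "_ \<longleftrightarrow> _ \<and> ?local")
proof
  assume y: "young D"
  have "1 \<le> i \<and> 1 \<le> j \<and> (i = 1 \<or> (i - 1, j) \<in> D) \<and> (j = 1 \<or> (i, j - 1) \<in> D)"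
    if "(i, j) \<in> D" for i j
    using young_pos[OF y that] young_down[OF y that, of "i - 1" j] young_down[OF y that, of i "j - 1"]
    by (cases "i = 1"; cases "j = 1") auto
  then show "finite D \<and> ?local"
    using young_finite[OF y] by blast
next
  assume "finite D \<and> ?local"
  then have fin: "finite D"
    and pos: "\<And>i j. (i, j) \<in> D \<Longrightarrow> 1 \<le> i \<and> 1 \<le> j"
    and up1: "\<And>i j. (i, j) \<in> D \<Longrightarrow> i \<noteq> 1 \<Longrightarrow> (i - 1, j) \<in> D"
    and left1: "\<And>i j. (i, j) \<in> D \<Longrightarrow> j \<noteq> 1 \<Longrightarrow> (i, j - 1) \<in> D"
    by blast+
  have up: "(i - k, j) \<in> D" if "(i, j) \<in> D" "k < i" for i j k
    using that(2)
  proof (induction k)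
    case (Suc k)
    then have "(i - k, j) \<in> D" "i - k \<noteq> 1"
      by simp_all
    then show ?case
      using up1[of "i - k" j] by simp
  qed (use that in simp)
  have left: "(i, j - k) \<in> D" if "(i, j) \<in> D" "k < j" for i j k
    using that(2)
  proof (induction k)
    case (Suc k)
    then have "(i, j - k) \<in> D" "j - k \<noteq> 1"
      by simp_all
    then show ?case
      using left1[of i "j - k"] by simp
  qed (use that in simp)
  have "(i', j') \<in> D" if "(i, j) \<in> D" "1 \<le> i'" "i' \<le> i" "1 \<le> j'" "j' \<le> j" for i j i' j'
  proof -
    have "(i', j) \<in> D"
      using up[OF that(1), of "i - i'"] that(2,3) by simp
    then show ?thesis
      using left[of i' j "j - j'"] that(4,5) by simp
  qed
  then show "young D"
    unfolding young_def using fin pos by blast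
qed

lemma young_localD:
  assumes "young D" "(i, j) \<in> D"
  shows "1 \<le> i" "1 \<le> j" "i \<noteq> 1 \<Longrightarrow> (i - 1, j) \<in> D" "j \<noteq> 1 \<Longrightarrow> (i, j - 1) \<in> D"
  using assms unfolding young_iff_local by blast+

lemma addable_iff:
  assumes y: "young D"
  shows "addable D (i, j) \<longleftrightarrow>
    (i, j) \<notin> D \<and> 1 \<le> i \<and> 1 \<le> j \<and> (i = 1 \<or> (i - 1, j) \<in> D) \<and> (j = 1 \<or> (i, j - 1) \<in> D)"
    (is "_ \<longleftrightarrow> _ \<and> ?local")
proof
  assume "addable D (i, j)"
  then have "young (insert (i, j) D)" "(i, j) \<notin> D"
    by (auto simp: addable_def)
  then show "(i, j) \<notin> D \<and> ?local"
    using young_localD[of "insert (i, j) D" i j] by (cases "i = 1"; cases "j = 1") auto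
next
  assume new: "(i, j) \<notin> D \<and> ?local"
  have "1 \<le> a \<and> 1 \<le> b \<and> (a = 1 \<or> (a - 1, b) \<in> insert (i, j) D) \<and> (b = 1 \<or> (a, b - 1) \<in> insert (i, j) D)"
    if "(a, b) \<in> insert (i, j) D" for a b
    using that new young_localD[OF y, of a b] by auto
  then have "young (insert (i, j) D)"
    unfolding young_iff_local using young_finite[OF y] by blast
  then show "addable D (i, j)"
    using new by (simp add: addable_def)
qed

lemma removable_iff:
  assumes y: "young D"
  shows "removable D (i, j) \<longleftrightarrow> (i, j) \<in> D \<and> (i + 1, j) \<notin> D \<and> (i, j + 1) \<notin> D"
proof
  assume "removable D (i, j)"
  then have "young (D - {(i, j)})" "(i, j) \<in> D"
    by (auto simp: removable_def)
  then show "(i, j) \<in> D \<and> (i + 1, j) \<notin> D \<and> (i, j + 1) \<notin> D"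
    using young_localD[of "D - {(i, j)}" "i + 1" j] young_localD[of "D - {(i, j)}" i "j + 1"]
      young_localD[OF y, of i j] by auto
next
  assume end_cell: "(i, j) \<in> D \<and> (i + 1, j) \<notin> D \<and> (i, j + 1) \<notin> D"
  have "1 \<le> a \<and> 1 \<le> b \<and> (a = 1 \<or> (a - 1, b) \<in> D - {(i, j)}) \<and> (b = 1 \<or> (a, b - 1) \<in> D - {(i, j)})"
    if "(a, b) \<in> D - {(i, j)}" for a b
  proof -
    have ab: "(a, b) \<in> D" "(a, b) \<noteq> (i, j)" "(a, b) \<noteq> (i + 1, j)" "(a, b) \<noteq> (i, j + 1)"
      using that end_cell by auto
    show ?thesis
      using young_localD[OF y ab(1)] ab by (cases "a = 1"; cases "b = 1") auto
  qed
  then have "young (D - {(i, j)})"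
    unfolding young_iff_local using young_finite[OF y] by blast
  then show "removable D (i, j)"
    using end_cell by (simp add: removable_def)
qed

definition conjugate :: "square set \<Rightarrow> square set" where
  "conjugate D = prod.swap ` D"

lemma mem_conjugate [simp]: "c \<in> conjugate D \<longleftrightarrow> prod.swap c \<in> D"
  unfolding conjugate_def by (metis image_iff swap_swap)

lemma young_conjugate:
  assumes y: "young D"
  shows "young (conjugate D)"
proof -
  have "finite (conjugate D)"
    using young_finite[OF y] by (simp add: conjugate_def)
  moreover have "1 \<le> i \<and> 1 \<le> j \<and> (i = 1 \<or> (i - 1, j) \<in> conjugate D) \<and> (j = 1 \<or> (i, j - 1) \<in> conjugate D)"
    if "(i, j) \<in> conjugate D" for i j
    using young_localD[OF y, of j i] that by auto
  ultimately show ?thesis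
    unfolding young_iff_local by blast
qed

lemma conjugate_staircase [simp]: "conjugate (staircase r) = staircase r"
  by (auto simp: staircase_def)

lemma adjacent_swap: "adjacent (prod.swap a) (prod.swap b) \<longleftrightarrow> adjacent a b"
  by (cases a; cases b) (auto simp: adjacent_def)

lemma domino_step_conjugate:
  assumes "domino_step D D'"
  shows "domino_step (conjugate D) (conjugate D')"
proof -
  obtain a b where ab: "a \<in> D" "b \<in> D" "adjacent a b" "D' = D - {a, b}" "young D'"
    using assms by (auto simp: domino_step_def)
  have "conjugate D' = conjugate D - {prod.swap a, prod.swap b}"
    using ab(4) by (auto simp: swap_swap[symmetric])
  moreover have "prod.swap a \<in> conjugate D" "prod.swap b \<in> conjugate D"
    using ab(1,2) by simp_all
  moreover have "adjacent (prod.swap a) (prod.swap b)"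
    using ab(3) adjacent_swap by blast
  moreover have "young (conjugate D')"
    using ab(5) by (rule young_conjugate)
  ultimately show ?thesis
    unfolding domino_step_def by blast
qed

lemma reduction_conjugate:
  "domino_step\<^sup>*\<^sup>* D E \<Longrightarrow> domino_step\<^sup>*\<^sup>* (conjugate D) (conjugate E)"
  by (induction rule: rtranclp_induct) (auto intro: rtranclp.rtrancl_into_rtrancl domino_step_conjugate)

definition row_len :: "nat list \<Rightarrow> nat \<Rightarrow> nat" where
  "row_len p i = (if 1 \<le> i \<and> i \<le> length p then p ! (i - 1) else 0)"

lemma mem_Y_iff: "(i, j) \<in> Y p \<longleftrightarrow> 1 \<le> i \<and> 1 \<le> j \<and> j \<le> row_len p i"
  unfolding Y_def row_len_def by auto

lemma row_len_antimono:
  assumes "is_partition p" "1 \<le> i" "i \<le> i'"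
  shows "row_len p i' \<le> row_len p i"
proof (cases "i < i' \<and> i' \<le> length p")
  case True
  then have "p ! (i' - 1) \<le> p ! (i - 1)"
    using assms sorted_wrt_nth_less[of "(\<ge>)" p "i - 1" "i' - 1"] by (auto simp: is_partition_def)
  then show ?thesis
    using True assms by (simp add: row_len_def)
qed (use assms in \<open>auto simp: row_len_def\<close>)

lemma young_Y:
  assumes "is_partition p"
  shows "young (Y p)"
proof -
  have "Y p \<subseteq> {1..length p} \<times> {1..sum_list p}"
  proof
    fix c
    assume "c \<in> Y p"
    then obtain i j where c: "c = (i, j)" "1 \<le> i" "i \<le> length p" "1 \<le> j" "j \<le> p ! (i - 1)"
      by (auto simp: Y_def)
    then have "p ! (i - 1) \<le> sum_list p"
      by (intro member_le_sum_list) auto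
    then show "c \<in> {1..length p} \<times> {1..sum_list p}"
      using c by auto
  qed
  then have "finite (Y p)"
    by (rule finite_subset) auto
  moreover have "(i', j') \<in> Y p"
    if "(i, j) \<in> Y p" "1 \<le> i'" "i' \<le> i" "1 \<le> j'" "j' \<le> j" for i j i' j'
    using that row_len_antimono[OF assms, of i' i] by (auto simp: mem_Y_iff)
  ultimately show ?thesis
    unfolding young_def by (auto simp: mem_Y_iff)
qed

section \<open>Corners of the parity of the rank\<close>

definition same_parity :: "nat \<Rightarrow> square \<Rightarrow> bool" where
  "same_parity r c \<longleftrightarrow> even (fst c + snd c + r)"

lemma same_parity_Suc [simp]:
  "same_parity r (Suc i, j) \<longleftrightarrow> \<not> same_parity r (i, j)"
  "same_parity r (i, Suc j) \<longleftrightarrow> \<not> same_parity r (i, j)"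
  by (simp_all add: same_parity_def)

lemma same_parity_pred:
  "1 \<le> i \<Longrightarrow> same_parity r (i - 1, j) \<longleftrightarrow> \<not> same_parity r (i, j)"
  "1 \<le> j \<Longrightarrow> same_parity r (i, j - 1) \<longleftrightarrow> \<not> same_parity r (i, j)"
  using same_parity_Suc[of r "i - 1" j] same_parity_Suc[of r i "j - 1"] by simp_all

definition addable_cells :: "nat \<Rightarrow> square set \<Rightarrow> square set" where
  "addable_cells r D = {c. addable D c \<and> same_parity r c}"

definition removable_cells :: "nat \<Rightarrow> square set \<Rightarrow> square set" where
  "removable_cells r D = {c. removable D c \<and> same_parity r c}"

definition corner_balance :: "nat \<Rightarrow> square set \<Rightarrow> int" where
  "corner_balance r D = int (card (addable_cells r D)) - int (card (removable_cells r D))"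

lemma finite_removable_cells: "young D \<Longrightarrow> finite (removable_cells r D)"
  by (rule finite_subset[of _ D]) (auto simp: removable_cells_def removable_def young_def)

lemma finite_addable_cells:
  assumes y: "young D"
  shows "finite (addable_cells r D)"
proof (rule finite_subset)
  show "addable_cells r D \<subseteq> insert (1, 1) ((\<lambda>(i, j). (i + 1, j)) ` D \<union> (\<lambda>(i, j). (i, j + 1)) ` D)"
  proof
    fix c
    assume "c \<in> addable_cells r D"
    then obtain i j where c: "c = (i, j)" "addable D (i, j)"
      by (cases c) (auto simp: addable_cells_def)
    then have "1 \<le> i" "1 \<le> j" "i = 1 \<or> (i - 1, j) \<in> D" "j = 1 \<or> (i, j - 1) \<in> D"
      using addable_iff[OF y] by auto
    then have "c = (1, 1) \<or> c = (\<lambda>(i, j). (i + 1, j)) (i - 1, j) \<and> (i - 1, j) \<in> D \<or>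
        c = (\<lambda>(i, j). (i, j + 1)) (i, j - 1) \<and> (i, j - 1) \<in> D"
      using c(1) by auto
    then show "c \<in> insert (1, 1) ((\<lambda>(i, j). (i + 1, j)) ` D \<union> (\<lambda>(i, j). (i, j + 1)) ` D)"
      by blast
  qed
  show "finite (insert (1, 1) ((\<lambda>(i, j). (i + 1, j)) ` D \<union> (\<lambda>(i, j). (i, j + 1)) ` D))"
    using young_finite[OF y] by simp
qed

lemma addable_insert:
  assumes y: "young D" and c: "addable D (i, j)"
  shows "addable (insert (i, j) D) (a, b) \<longleftrightarrow>
     (addable D (a, b) \<and> (a, b) \<noteq> (i, j)) \<or>
     ((a, b) = (i + 1, j) \<and> (j = 1 \<or> (i + 1, j - 1) \<in> D)) \<or>
     ((a, b) = (i, j + 1) \<and> (i = 1 \<or> (i - 1, j + 1) \<in> D))"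
proof -
  have y': "young (insert (i, j) D)"
    using c by (simp add: addable_def)
  have ij: "(i, j) \<notin> D" "1 \<le> i" "1 \<le> j"
    using c addable_iff[OF y] by auto
  have "(i + 1, j) \<notin> D" "(i, j + 1) \<notin> D"
    using young_down[OF y, of "i + 1" j i j] young_down[OF y, of i "j + 1" i j] ij by auto
  then show ?thesis
    unfolding addable_iff[OF y'] addable_iff[OF y] using ij by auto
qed

lemma removable_insert:
  assumes y: "young D" and c: "addable D (i, j)"
  shows "removable (insert (i, j) D) (a, b) \<longleftrightarrow>
     (removable D (a, b) \<and> (a, b) \<noteq> (i - 1, j) \<and> (a, b) \<noteq> (i, j - 1)) \<or> (a, b) = (i, j)"
proof -
  have y': "young (insert (i, j) D)"
    using c by (simp add: addable_def)
  have ij: "(i, j) \<notin> D" "1 \<le> i" "1 \<le> j"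
    using c addable_iff[OF y] by auto
  have "(i + 1, j) \<notin> D" "(i, j + 1) \<notin> D"
    using young_down[OF y, of "i + 1" j i j] young_down[OF y, of i "j + 1" i j] ij by auto
  then show ?thesis
    unfolding removable_iff[OF y'] removable_iff[OF y] using ij by auto
qed

lemma corner_balance_insert_same:
  assumes y: "young D" and c: "addable D (i, j)" and par: "same_parity r (i, j)"
  shows "corner_balance r (insert (i, j) D) = corner_balance r D - 2"
proof -
  let ?D' = "insert (i, j) D"
  have y': "young ?D'"
    using c by (simp add: addable_def)
  have ij: "(i, j) \<notin> D" "1 \<le> i" "1 \<le> j"
    using c addable_iff[OF y] by auto
  have neighbours: "\<not> same_parity r (i + 1, j)" "\<not> same_parity r (i, j + 1)"
    "\<not> same_parity r (i - 1, j)" "\<not> same_parity r (i, j - 1)"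
    using par ij same_parity_pred by auto
  have A: "addable_cells r ?D' = addable_cells r D - {(i, j)}"
    using addable_insert[OF y c] neighbours by (auto simp: addable_cells_def)
  have R: "removable_cells r ?D' = insert (i, j) (removable_cells r D)"
    using removable_insert[OF y c] neighbours par by (auto simp: removable_cells_def)
  have "(i, j) \<in> addable_cells r D" "(i, j) \<notin> removable_cells r D"
    using c par ij by (auto simp: addable_cells_def removable_cells_def removable_def)
  moreover from this have "0 < card (addable_cells r D)"
    using finite_addable_cells[OF y] card_gt_0_iff by blast
  ultimately show ?thesis
    using A R finite_addable_cells[OF y] finite_removable_cells[OF y]
    by (simp add: corner_balance_def card_Diff_singleton of_nat_diff)
qed

text \<open>On each side of a new cell of the other parity exactly one of two things happens: the
  neighbour beyond it becomes addable, or the neighbour before it stops being removable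
  (the alternatives \<open>P1\<close>, \<open>P2\<close> below).\<close>

lemma corner_balance_insert_other:
  assumes y: "young D" and c: "addable D (i, j)" and par: "\<not> same_parity r (i, j)"
  shows "corner_balance r (insert (i, j) D) = corner_balance r D + 2"
proof -
  let ?D' = "insert (i, j) D"
  have y': "young ?D'"
    using c by (simp add: addable_def)
  have ij: "(i, j) \<notin> D" "1 \<le> i" "1 \<le> j" "i = 1 \<or> (i - 1, j) \<in> D" "j = 1 \<or> (i, j - 1) \<in> D"
    using c addable_iff[OF y] by auto
  have neighbours: "same_parity r (i + 1, j)" "same_parity r (i, j + 1)"
    "same_parity r (i - 1, j)" "same_parity r (i, j - 1)"
    using par ij same_parity_pred by auto
  define P1 where "P1 \<longleftrightarrow> i = 1 \<or> (i - 1, j + 1) \<in> D"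
  define P2 where "P2 \<longleftrightarrow> j = 1 \<or> (i + 1, j - 1) \<in> D"
  define X where "X = (if P1 then {(i, j + 1)} else {}) \<union> (if P2 then {(i + 1, j)} else {})"
  define Z where "Z = (if P1 then {} else {(i - 1, j)}) \<union> (if P2 then {} else {(i, j - 1)})"
  have A: "addable_cells r ?D' = addable_cells r D \<union> X"
    using addable_insert[OF y c] neighbours par
    unfolding addable_cells_def X_def P1_def P2_def by auto
  have AX: "addable_cells r D \<inter> X = {}"
    using addable_iff[OF y] ij unfolding addable_cells_def X_def by auto
  have "removable D (i - 1, j) \<longleftrightarrow> \<not> P1" "removable D (i, j - 1) \<longleftrightarrow> \<not> P2"
    unfolding P1_def P2_def removable_iff[OF y] using ij young_pos[OF y] by force+
  then have R: "removable_cells r D = removable_cells r ?D' \<union> Z"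
    using removable_insert[OF y c] neighbours par unfolding removable_cells_def Z_def by auto
  have RZ: "removable_cells r ?D' \<inter> Z = {}"
    using removable_insert[OF y c] ij unfolding removable_cells_def Z_def by auto
  have "card X + card Z = 2"
    using ij by (cases P1; cases P2) (auto simp: X_def Z_def)
  moreover have "card (addable_cells r ?D') = card (addable_cells r D) + card X"
    using A AX finite_addable_cells[OF y] by (simp add: X_def card_Un_disjoint)
  moreover have "card (removable_cells r D) = card (removable_cells r ?D') + card Z"
    using R RZ finite_removable_cells[OF y'] by (simp add: Z_def card_Un_disjoint)
  ultimately show ?thesis
    by (simp add: corner_balance_def)
qed

lemma corner_balance_insert:
  assumes "young D" "addable D c"
  shows "corner_balance r (insert c D) = corner_balance r D + (if same_parity r c then -2 else 2)"
  using assms corner_balance_insert_same[of D "fst c" "snd c" r]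
    corner_balance_insert_other[of D "fst c" "snd c" r]
  by (cases "same_parity r c") auto

lemma domino_as_insertions:
  assumes y: "young D" "young D'" and D': "D' = D - {u, v}" and uv: "u \<in> D" "v \<in> D"
    and below: "v = (fst u + 1, snd u) \<or> v = (fst u, snd u + 1)"
  shows "addable D' u" "addable (insert u D') v" "D = insert v (insert u D')"
proof -
  obtain i j where u: "u = (i, j)"
    by (cases u)
  obtain a b where v: "v = (a, b)"
    by (cases v)
  show au: "addable D' u"
    unfolding u addable_iff[OF y(2)] using young_localD[OF y(1), of i j] uv below u D'
    by (cases "i = 1"; cases "j = 1") auto
  then have "young (insert u D')"
    by (simp add: addable_def)
  then show "addable (insert u D') v"
    unfolding v addable_iff[OF \<open>young (insert u D')\<close>] using young_localD[OF y(1), of a b] uv below u v D'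
    by (cases "a = 1"; cases "b = 1") auto
  show "D = insert v (insert u D')"
    using D' uv by auto
qed

lemma adjacent_ordered:
  assumes "adjacent a b"
  obtains u v where "{u, v} = {a, b}" "v = (fst u + 1, snd u) \<or> v = (fst u, snd u + 1)"
proof (cases "b = (fst a + 1, snd a) \<or> b = (fst a, snd a + 1)")
  case True
  then show ?thesis
    using that[of a b] by blast
next
  case False
  then have "a = (fst b + 1, snd b) \<or> a = (fst b, snd b + 1)"
    using assms by (cases a; cases b) (auto simp: adjacent_def)
  then show ?thesis
    using that[of b a] by (simp add: insert_commute)
qed

lemma corner_balance_domino_step:
  assumes step: "domino_step D D'" and y: "young D"
  shows "corner_balance r D = corner_balance r D'"
proof -
  obtain a b where ab: "a \<in> D" "b \<in> D" "adjacent a b" "D' = D - {a, b}" "young D'"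
    using step by (auto simp: domino_step_def)
  obtain u v where uv: "{u, v} = {a, b}" and below: "v = (fst u + 1, snd u) \<or> v = (fst u, snd u + 1)"
    using adjacent_ordered[OF ab(3)] .
  have D': "D' = D - {u, v}" and uvD: "u \<in> D" "v \<in> D"
    using ab uv by auto
  note ins = domino_as_insertions[OF y ab(5) D' uvD below]
  have "same_parity r v \<longleftrightarrow> \<not> same_parity r u"
    using below by (cases u) auto
  then show ?thesis
    using ins corner_balance_insert[OF ab(5) ins(1), of r]
      corner_balance_insert[OF _ ins(2), of r] ins(1)[unfolded addable_def] by auto
qed

definition antidiagonal :: "nat \<Rightarrow> square set" where
  "antidiagonal n = {(i, j). 1 \<le> i \<and> 1 \<le> j \<and> i + j = n}"

lemma antidiagonal_eq_image: "antidiagonal n = (\<lambda>i. (i, n - i)) ` {1..n - 1}"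
  unfolding antidiagonal_def by (auto simp: image_iff)

lemma finite_antidiagonal: "finite (antidiagonal n)"
  by (simp add: antidiagonal_eq_image)

lemma card_antidiagonal: "card (antidiagonal n) = n - 1"
proof -
  have "inj_on (\<lambda>i. (i, n - i)) {1..n - 1}"
    by (auto simp: inj_on_def)
  then show ?thesis
    by (simp add: antidiagonal_eq_image card_image)
qed

lemma young_staircase: "young (staircase r)"
  unfolding young_def staircase_def
proof (intro conjI)
  show "finite {(i, j). 1 \<le> i \<and> 1 \<le> j \<and> i + j \<le> r + 1}"
    by (rule finite_subset[of _ "{0..r + 1} \<times> {0..r + 1}"]) auto
qed auto

lemma mem_staircase_iff: "(i, j) \<in> staircase r \<longleftrightarrow> 1 \<le> i \<and> 1 \<le> j \<and> i + j \<le> r + 1"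
  by (simp add: staircase_def)

lemma addable_staircase_iff: "addable (staircase r) c \<longleftrightarrow> c \<in> antidiagonal (r + 2)"
  by (cases c) (auto simp: addable_iff[OF young_staircase] mem_staircase_iff antidiagonal_def)

lemma removable_staircase: "removable (staircase r) (i, j) \<Longrightarrow> i + j = r + 1"
  by (auto simp: removable_iff[OF young_staircase] mem_staircase_iff)

lemma same_parity_antidiagonal: "c \<in> antidiagonal (r + 2) \<Longrightarrow> same_parity r c"
  by (auto simp: antidiagonal_def same_parity_def) presburger+

lemma not_same_parity_rim: "fst c + snd c = r + 1 \<Longrightarrow> \<not> same_parity r c"
  by (auto simp: same_parity_def)

lemma corner_balance_staircase: "corner_balance r (staircase r) = int r + 1"
proof -
  have "addable_cells r (staircase r) = antidiagonal (r + 2)"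
    using same_parity_antidiagonal by (auto simp: addable_cells_def addable_staircase_iff)
  moreover have "removable_cells r (staircase r) = {}"
    using removable_staircase not_same_parity_rim by (fastforce simp: removable_cells_def)
  ultimately show ?thesis
    by (simp add: corner_balance_def card_antidiagonal)
qed

section \<open>Diagrams reducing to the staircase\<close>

lemma domino_step_subset: "domino_step D D' \<Longrightarrow> D' \<subseteq> D"
  by (auto simp: domino_step_def)

lemma domino_step_young: "domino_step D D' \<Longrightarrow> young D'"
  by (auto simp: domino_step_def)

lemma staircase_subset_of_reduction: "domino_step\<^sup>*\<^sup>* D (staircase r) \<Longrightarrow> staircase r \<subseteq> D"
  by (induction rule: converse_rtranclp_induct) (auto dest: domino_step_subset)

lemma corner_balance_of_reduction:
  "domino_step\<^sup>*\<^sup>* D (staircase r) \<Longrightarrow> young D \<Longrightarrow> corner_balance r D = int r + 1"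
  by (induction rule: converse_rtranclp_induct)
    (auto simp: corner_balance_staircase corner_balance_domino_step domino_step_young)

lemma adjacent_sym: "adjacent a b \<longleftrightarrow> adjacent b a"
  by (auto simp: adjacent_def)

lemma neighbour_outside_staircase:
  assumes "domino_step\<^sup>*\<^sup>* D (staircase r)" "s \<in> D - staircase r"
  shows "\<exists>t\<in>D - staircase r. adjacent s t"
  using assms
proof (induction arbitrary: s rule: converse_rtranclp_induct)
  case (step D D')
  obtain a b where ab: "a \<in> D" "b \<in> D" "adjacent a b" "D' = D - {a, b}"
    using step.hyps(1) by (auto simp: domino_step_def)
  have "a \<notin> staircase r" "b \<notin> staircase r"
    using staircase_subset_of_reduction[OF step.hyps(2)] ab(4) by auto
  show ?case
  proof (cases "s \<in> D'")
    case True
    then obtain t where "t \<in> D' - staircase r" "adjacent s t"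
      using step.IH[of s] step.prems by blast
    then show ?thesis
      using ab(4) by blast
  next
    case False
    then have "s = a \<or> s = b"
      using step.prems ab(4) by blast
    then show ?thesis
      using ab(1-3) \<open>a \<notin> staircase r\<close> \<open>b \<notin> staircase r\<close> adjacent_sym by blast
  qed
qed simp

text \<open>Going from \<open>D'\<close> back to \<open>D\<close> adds a domino. A vertical one moves a column bottom by two
  rows and keeps its parity; a horizontal one left of the missing antidiagonal cell would put the
  bottoms of two adjacent columns of \<open>D'\<close> into the same row, giving them different parities.\<close>

lemma column_bottom_domino_step:
  assumes y: "young D" and D': "D' = D - {c, e}" "c \<in> D" "e \<in> D" "adjacent c e"
    and st: "staircase r \<subseteq> D'"
    and IH: "\<And>a b. (a, b) \<in> D' \<Longrightarrow> (a + 1, b) \<notin> D' \<Longrightarrow> b < j0 \<Longrightarrow> \<not> same_parity r (a, b)"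
    and missing: "1 \<le> i0" "i0 + j0 = r + 2" "(i0, j0) \<notin> D"
    and c: "c = (i, j)" "(i + 1, j) \<notin> D" "j < j0"
  shows "\<not> same_parity r (i, j)"
proof -
  have pos: "1 \<le> i" "1 \<le> j"
    using young_pos[OF y] D'(2) c(1) by auto
  have "(i, j) \<notin> staircase r"
    using st D'(1) c(1) by auto
  then have out: "r + 2 \<le> i + j"
    using pos by (simp add: mem_staircase_iff)
  then have i2: "2 \<le> i"
    using c(3) missing(1,2) by linarith
  have up: "(i - 1, j) \<in> D"
    using young_down[OF y D'(2)[unfolded c(1)], of "i - 1" j] pos i2 by simp
  obtain i' j' where e: "e = (i', j')" "1 \<le> j'"
    using young_pos[OF y, of "fst e" "snd e"] D'(3) by (cases e) auto
  then consider (vertical) "e = (i - 1, j)" | (down) "e = (i + 1, j)"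
    | (horizontal) "i' = i" "j' + 1 = j \<or> j' = j + 1"
    using D'(4) c(1) by (auto simp: adjacent_def)
  then show ?thesis
  proof cases
    case vertical
    have "(1, j) \<in> staircase r"
      using c(3) missing(1,2) pos by (simp add: mem_staircase_iff)
    then have i3: "3 \<le> i"
      using st D'(1) vertical i2 by (cases "i = 2") auto
    have "(i - 2, j) \<in> D'" "(i - 2 + 1, j) \<notin> D'"
      using young_down[OF y up, of "i - 2" j] D'(1) c(1) vertical i3 pos
      by (auto simp: numeral_2_eq_2 Suc_diff_Suc)
    then have "\<not> same_parity r (i - 2, j)"
      using IH c(3) by blast
    moreover have "i = Suc (Suc (i - 2))"
      using i3 by simp
    ultimately show ?thesis
      by (metis same_parity_Suc(1))
  next
    case down
    then show ?thesis
      using c(2) D'(3) by simp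
  next
    case horizontal
    show ?thesis
    proof (cases "j' < j0")
      case True
      have "(i - 1, j') \<in> D"
        using young_down[OF y D'(3)[unfolded e(1)], of "i - 1" j'] horizontal e(2) i2 by simp
      then have "(i - 1, j) \<in> D'" "(i - 1 + 1, j) \<notin> D'" "(i - 1, j') \<in> D'" "(i - 1 + 1, j') \<notin> D'"
        using up D'(1) c(1) e(1) horizontal i2 by auto
      then have "\<not> same_parity r (i - 1, j)" "\<not> same_parity r (i - 1, j')"
        using IH c(3) True by blast+
      then show ?thesis
        using horizontal(2) by auto
    next
      case False
      then have "(i0, j0) \<in> D"
        using young_down[OF y D'(3)[unfolded e(1)], of i0 j0] horizontal c(3) out missing by auto
      then show ?thesis
        using missing(3) by contradiction
    qed
  qed
qed

lemma column_bottom_not_same_parity: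
  assumes "domino_step\<^sup>*\<^sup>* D (staircase r)" "young D"
    and "1 \<le> i0" "i0 + j0 = r + 2" "(i0, j0) \<notin> D"
    and "(i, j) \<in> D" "(i + 1, j) \<notin> D" "j < j0"
  shows "\<not> same_parity r (i, j)"
  using assms
proof (induction arbitrary: i j rule: converse_rtranclp_induct)
  case base
  then have "i + j = r + 1"
    by (auto simp: mem_staircase_iff)
  then show ?case
    using not_same_parity_rim[of "(i, j)"] by simp
next
  case (step D D')
  obtain c e where ce: "c \<in> D" "e \<in> D" "adjacent c e" "D' = D - {c, e}" "young D'"
    using step.hyps(1) by (auto simp: domino_step_def)
  have IH: "\<And>a b. (a, b) \<in> D' \<Longrightarrow> (a + 1, b) \<notin> D' \<Longrightarrow> b < j0 \<Longrightarrow> \<not> same_parity r (a, b)"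
    using step.IH ce(4,5) step.prems(2-4) by blast
  show ?case
  proof (cases "(i, j) \<in> D'")
    case True
    then show ?thesis
      using IH step.prems(6,7) ce(4) by blast
  next
    case False
    then have "(i, j) = c \<or> (i, j) = e"
      using step.prems(5) ce(4) by blast
    moreover have "D' = D - {e, c}" "adjacent e c"
      using ce(3,4) adjacent_sym by auto
    ultimately show ?thesis
      using column_bottom_domino_step[OF step.prems(1) ce(4) ce(1-3)
          staircase_subset_of_reduction[OF step.hyps(2)] IH step.prems(2-4) _ step.prems(6,7)]
        column_bottom_domino_step[OF step.prems(1) \<open>D' = D - {e, c}\<close> ce(2,1) \<open>adjacent e c\<close>
          staircase_subset_of_reduction[OF step.hyps(2)] IH step.prems(2-4) _ step.prems(6,7)]
      by metis
  qed
qed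

lemma row_end_not_same_parity:
  assumes "domino_step\<^sup>*\<^sup>* D (staircase r)" "young D"
    and "1 \<le> j0" "i0 + j0 = r + 2" "(i0, j0) \<notin> D"
    and "(i, j) \<in> D" "(i, j + 1) \<notin> D" "i < i0"
  shows "\<not> same_parity r (i, j)"
proof -
  have "\<not> same_parity r (j, i)"
    using column_bottom_not_same_parity[of "conjugate D" r j0 i0 j i]
      reduction_conjugate[OF assms(1)] young_conjugate[OF assms(2)] assms(3-8) by (simp add: add.commute)
  then show ?thesis
    by (simp add: same_parity_def add.commute)
qed

text \<open>A removable cell is a column bottom and a row end at once, so by the two previous lemmas it
  can only have the parity of the antidiagonal if it lies weakly below and right of every missing
  antidiagonal cell.\<close>

lemma antidiagonal_subset_of_reduction:
  assumes red: "domino_step\<^sup>*\<^sup>* D (staircase r)" and y: "young D"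
    and c: "removable D (i, j)" "same_parity r (i, j)"
  shows "antidiagonal (r + 2) \<subseteq> D"
proof
  fix t
  assume "t \<in> antidiagonal (r + 2)"
  then obtain i0 j0 where t: "t = (i0, j0)" "1 \<le> i0" "1 \<le> j0" "i0 + j0 = r + 2"
    by (auto simp: antidiagonal_def)
  have end_cell: "(i, j) \<in> D" "(i + 1, j) \<notin> D" "(i, j + 1) \<notin> D"
    using c(1) removable_iff[OF y] by auto
  show "t \<in> D"
  proof (rule ccontr)
    assume "t \<notin> D"
    then have "\<not> j < j0" "\<not> i < i0"
      using column_bottom_not_same_parity[OF red y, of i0 j0 i j]
        row_end_not_same_parity[OF red y, of j0 i0 i j] t end_cell c(2) by auto
    then show False
      using young_down[OF y end_cell(1), of i0 j0] t \<open>t \<notin> D\<close> by (simp add: not_less)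
  qed
qed

lemma antidiagonal_not_removable:
  assumes red: "domino_step\<^sup>*\<^sup>* D (staircase r)" and y: "young D"
    and "(i, j) \<in> D" "i + j = r + 2"
  shows "\<not> removable D (i, j)"
proof
  assume "removable D (i, j)"
  then have free: "(i + 1, j) \<notin> D" "(i, j + 1) \<notin> D"
    using removable_iff[OF y] by auto
  have "(i, j) \<notin> staircase r"
    using assms(4) by (simp add: mem_staircase_iff)
  then obtain t where t: "t \<in> D - staircase r" "adjacent (i, j) t"
    using neighbour_outside_staircase[OF red] assms(3) by blast
  have pos: "1 \<le> fst t" "1 \<le> snd t"
    using young_pos[OF y, of "fst t" "snd t"] t(1) by auto
  then show False
    using t free assms(4) by (cases t) (auto simp: adjacent_def mem_staircase_iff)
qed

section \<open>The squares of \<open>HC*(p)\<close>\<close>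

lemma young_of_in_P: "in_P r p \<Longrightarrow> young (Y p)"
  by (simp add: in_P_def young_Y)

lemma reduction_of_in_P: "in_P r p \<Longrightarrow> domino_step\<^sup>*\<^sup>* (Y p) (staircase r)"
  by (simp add: in_P_def)

lemma same_parity_iff_mod: "same_parity r (i, j) \<longleftrightarrow> (i + j) mod 2 = r mod 2"
  by (simp add: same_parity_def) presburger

lemma corner_pos:
  assumes "young D" "corner D (i, j)"
  shows "1 \<le> i" "1 \<le> j"
  using assms addable_iff[of D i j] young_pos[of D i j] by (auto simp: corner_def removable_def)

lemma corner_beyond_staircase:
  assumes y: "young D" and st: "staircase r \<subseteq> D"
    and c: "corner D (i, j)" "same_parity r (i, j)"
  shows "r + 1 < i + j"
proof (rule ccontr)
  assume "\<not> r + 1 < i + j"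
  moreover have "i + j \<noteq> r + 1"
    using c(2) not_same_parity_rim[of "(i, j)" r] by auto
  ultimately have "(i, j) \<in> D" "(i + 1, j) \<in> D"
    using st corner_pos[OF y c(1)] by (auto simp: mem_staircase_iff subset_iff)
  then show False
    using c(1) addable_iff[OF y] removable_iff[OF y] by (auto simp: corner_def)
qed

lemma HC_eq:
  assumes p: "in_P r p"
  shows "HC r p = addable_cells r (Y p) \<union> removable_cells r (Y p)"
proof -
  note y = young_of_in_P[OF p]
  note st = staircase_subset_of_reduction[OF reduction_of_in_P[OF p]]
  have "(i, j) \<in> HC r p \<longleftrightarrow> corner (Y p) (i, j) \<and> same_parity r (i, j)" for i j
    using corner_pos[OF y] corner_beyond_staircase[OF y st]
    by (auto simp: HC_def addrem_iff same_parity_iff_mod corner_def)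
  then show ?thesis
    by (auto simp: addable_cells_def removable_cells_def corner_def)
qed

lemma kappa_eq: "in_P r p \<Longrightarrow> kappa r p = card (removable_cells r (Y p))"
  unfolding kappa_def HC_eq
  by (rule arg_cong[where f = card])
    (auto simp: addable_cells_def removable_cells_def addable_def removable_def)

lemma gamma_eq: "in_P r p \<Longrightarrow> gamma r p = card (antidiagonal (r + 2) \<inter> Y p)"
  unfolding gamma_def
  by (rule arg_cong[where f = card]) (auto simp: antidiagonal_def mem_Y_iff)

lemma HC_antidiagonal:
  assumes p: "in_P r p"
  shows "{c \<in> HC r p. fst c + snd c = r + 2} = antidiagonal (r + 2) - Y p"
proof -
  note y = young_of_in_P[OF p]
  note red = reduction_of_in_P[OF p]
  have "(i, j) \<in> HC r p \<longleftrightarrow> (i, j) \<notin> Y p \<and> 1 \<le> i \<and> 1 \<le> j" if ij: "i + j = r + 2" for i j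
  proof
    assume "(i, j) \<in> HC r p"
    then have "addable (Y p) (i, j) \<or> removable (Y p) (i, j)"
      by (auto simp: HC_eq[OF p] addable_cells_def removable_cells_def)
    moreover have "\<not> removable (Y p) (i, j)"
      using antidiagonal_not_removable[OF red y _ ij] by (auto simp: removable_def)
    ultimately show "(i, j) \<notin> Y p \<and> 1 \<le> i \<and> 1 \<le> j"
      by (simp add: addable_iff[OF y])
  next
    assume a: "(i, j) \<notin> Y p \<and> 1 \<le> i \<and> 1 \<le> j"
    have "(i - 1, j) \<in> staircase r" if "i \<noteq> 1"
      using that a ij by (cases i) (auto simp: mem_staircase_iff)
    moreover have "(i, j - 1) \<in> staircase r" if "j \<noteq> 1"
      using that a ij by (cases j) (auto simp: mem_staircase_iff)
    ultimately have "addable (Y p) (i, j)"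
      using a staircase_subset_of_reduction[OF red] by (auto simp: addable_iff[OF y])
    moreover have "same_parity r (i, j)"
      using same_parity_antidiagonal a ij by (simp add: antidiagonal_def)
    ultimately show "(i, j) \<in> HC r p"
      by (simp add: HC_eq[OF p] addable_cells_def)
  qed
  then show ?thesis
    by (auto simp: antidiagonal_def)
qed

lemma HCs_eq: "HCs r p = HC r p - {c \<in> HC r p. fst c + snd c = r + 2}"
  unfolding HCs_def HC_def by auto

lemma finite_HC: "in_P r p \<Longrightarrow> finite (HC r p)"
  using HC_eq young_of_in_P finite_addable_cells finite_removable_cells by auto

lemma finite_HCs: "in_P r p \<Longrightarrow> finite (HCs r p)"
  using finite_HC by (simp add: HCs_eq)

lemma card_HCs:
  assumes p: "in_P r p"
  shows "card (HCs r p) = gamma r p + 2 * kappa r p"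
proof -
  note y = young_of_in_P[OF p]
  let ?A = "addable_cells r (Y p)" and ?R = "removable_cells r (Y p)"
  let ?L = "{c \<in> HC r p. fst c + snd c = r + 2}"
  have "?A \<inter> ?R = {}"
    by (auto simp: addable_cells_def removable_cells_def addable_def removable_def)
  then have "card (HC r p) = card ?A + card ?R"
    unfolding HC_eq[OF p] using finite_addable_cells[OF y] finite_removable_cells[OF y]
    by (simp add: card_Un_disjoint)
  moreover have "card ?A = card ?R + r + 1"
    using corner_balance_of_reduction[OF reduction_of_in_P[OF p] y] by (simp add: corner_balance_def)
  moreover have "card (HCs r p) = card (HC r p) - card ?L"
    unfolding HCs_eq using finite_HC[OF p] by (simp add: card_Diff_subset)
  moreover have "card ?L = (r + 1) - gamma r p" "gamma r p \<le> r + 1"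
    unfolding HC_antidiagonal[OF p] gamma_eq[OF p]
    using card_Diff_subset_Int[of "antidiagonal (r + 2)" "Y p"] finite_antidiagonal card_antidiagonal
      card_mono[OF finite_antidiagonal, of "antidiagonal (r + 2) \<inter> Y p" "r + 2"] by simp_all
  ultimately show ?thesis
    using kappa_eq[OF p] by simp
qed

lemma HCs_eq_HC:
  assumes p: "in_P r p" and "kappa r p > 0"
  shows "HCs r p = HC r p"
proof -
  have "removable_cells r (Y p) \<noteq> {}"
    using assms kappa_eq[OF p] by auto
  then obtain i j where "removable (Y p) (i, j)" "same_parity r (i, j)"
    by (auto simp: removable_cells_def)
  then have "antidiagonal (r + 2) \<subseteq> Y p"
    using antidiagonal_subset_of_reduction[OF reduction_of_in_P[OF p] young_of_in_P[OF p]] by blast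
  then show ?thesis
    using HC_antidiagonal[OF p] HCs_eq[of r p] by auto
qed

lemma corners_in_row:
  assumes y: "young D" and c: "corner D (t, j)" "corner D (t, j')" and lt: "j < j'"
  shows "j' = j + 1"
proof -
  have pos: "1 \<le> t" "1 \<le> j"
    using corner_pos[OF y c(1)] by auto
  have "(t, j') \<notin> D"
  proof
    assume "(t, j') \<in> D"
    then have "(t, j + 1) \<in> D" "(t, j) \<in> D"
      using young_down[OF y] lt pos by auto
    then show False
      using c(1) removable_iff[OF y] by (auto simp: corner_def addable_def)
  qed
  then have "(t, j' - 1) \<in> D"
    using c(2) addable_iff[OF y, of t j'] lt pos by (auto simp: corner_def removable_def)
  then have "(t, j) \<in> D"
    using young_down[OF y, of t "j' - 1" t j] pos lt by auto
  then have "(t, j + 1) \<notin> D"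
    using c(1) removable_iff[OF y] by (auto simp: corner_def addable_def)
  then show ?thesis
    using young_down[OF y \<open>(t, j' - 1) \<in> D\<close>, of t "j + 1"] pos lt by fastforce
qed

lemma corners_antitone:
  assumes y: "young D" and c: "corner D (i, j)" "corner D (i', j')" and lt: "i < i'"
  shows "j' \<le> j"
proof -
  have pos: "1 \<le> i" "1 \<le> j" "1 \<le> i'" "1 \<le> j'"
    using corner_pos[OF y c(1)] corner_pos[OF y c(2)] by auto
  have "(i' - 1, j') \<in> D"
  proof (cases "(i', j') \<in> D")
    case True
    then show ?thesis
      using young_down[OF y True, of "i' - 1" j'] pos lt by auto
  next
    case False
    then show ?thesis
      using c(2) addable_iff[OF y, of i' j'] lt pos by (auto simp: corner_def removable_def)
  qed
  then have "(i, j') \<in> D"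
    using young_down[OF y, of "i' - 1" j' i j'] pos lt by auto
  show ?thesis
  proof (rule ccontr)
    assume "\<not> j' \<le> j"
    then have "(i, j + 1) \<in> D" "(i, j) \<in> D"
      using young_down[OF y \<open>(i, j') \<in> D\<close>] pos by auto
    then show False
      using c(1) removable_iff[OF y] by (auto simp: corner_def addable_def)
  qed
qed

lemma corner_of_HCs: "c \<in> HCs r p \<Longrightarrow> corner (Y p) c \<and> same_parity r c"
  by (cases c) (auto simp: HCs_def corner_def addrem_iff same_parity_iff_mod)

lemma inj_on_fst_HCs:
  assumes p: "in_P r p"
  shows "inj_on fst (HCs r p)"
proof (rule inj_onI)
  fix c c'
  assume c: "c \<in> HCs r p" "c' \<in> HCs r p" and eq: "fst c = fst c'"
  obtain t j j' where t: "c = (t, j)" "c' = (t, j')"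
    using eq by (cases c; cases c') auto
  have "j' \<noteq> j + 1" "j \<noteq> j' + 1"
    using corner_of_HCs[OF c(1)] corner_of_HCs[OF c(2)] t by auto
  then show "c = c'"
    using corners_in_row[OF young_of_in_P[OF p]] corner_of_HCs[OF c(1)] corner_of_HCs[OF c(2)] t
    by (metis linorder_neqE_nat)
qed

lemma HCs_columns_antitone:
  assumes p: "in_P r p" and c: "c \<in> HCs r p" "c' \<in> HCs r p" and le: "fst c \<le> fst c'"
  shows "snd c' \<le> snd c"
proof (cases "fst c = fst c'")
  case True
  then show ?thesis
    using inj_on_fst_HCs[OF p] c by (metis inj_on_def order.refl)
next
  case False
  then show ?thesis
    using corners_antitone[OF young_of_in_P[OF p], of "fst c" "snd c" "fst c'" "snd c'"]
      corner_of_HCs[OF c(1)] corner_of_HCs[OF c(2)] le by auto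
qed

text \<open>Rows of a diagram: \<open>l t\<close> is the length of row \<open>t\<close>, \<open>e t\<close> the parity of its last cell and
  \<open>m t\<close> says that the row has a corner of the chosen parity. Between two consecutive marked rows
  the parity of the last cell alternates, which forces their distance to be odd.\<close>

lemma odd_distance_of_marked_rows:
  fixes l :: "nat \<Rightarrow> nat" and e m :: "nat \<Rightarrow> bool"
  assumes antimono: "\<And>t. 1 \<le> t \<Longrightarrow> l (t + 1) \<le> l t"
    and flip: "\<And>t. l (t + 1) = l t \<Longrightarrow> e (t + 1) \<longleftrightarrow> \<not> e t"
    and marked: "\<And>t. m t \<longleftrightarrow> (e t \<and> l (t + 1) < l t) \<or> (\<not> e t \<and> (t = 1 \<or> l t < l (t - 1)))"
    and t: "1 \<le> t1" "t1 < t2" "m t1" "m t2" and unmarked: "\<And>t. t1 < t \<Longrightarrow> t < t2 \<Longrightarrow> \<not> m t"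
  shows "odd (t2 - t1)"
proof (cases "t2 = t1 + 1")
  case False
  then have far: "t1 + 1 < t2"
    using t(2) by simp
  have flat_after: "l (t + 1) = l t" if "t1 < t" "t < t2" "e t" for t
    using antimono[of t] marked[of t] unmarked[OF that(1,2)] that(3) t(1) that(1) by force
  have flat_before: "l t = l (t - 1)" if "t1 < t" "t < t2" "\<not> e t" for t
  proof -
    have "l t \<le> l (t - 1)"
      using antimono[of "t - 1"] that(1) t(1) by simp
    then show ?thesis
      using marked[of t] unmarked[OF that(1,2)] that(3) by auto
  qed
  have start: "e (t1 + 1)"
  proof (rule ccontr)
    assume "\<not> e (t1 + 1)"
    then have "l (t1 + 1) = l t1"
      using flat_before[of "t1 + 1"] far by simp
    then show False
      using flip[of t1] marked[of t1] t(3) \<open>\<not> e (t1 + 1)\<close> by auto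
  qed
  have step: "e (t + 1) \<longleftrightarrow> \<not> e t" if "t1 < t" "t + 1 < t2" for t
  proof (cases "e t")
    case True
    then show ?thesis
      using flat_after[of t] flip[of t] that by simp
  next
    case False
    then show ?thesis
      using flat_before[of "t + 1"] flip[of t] that by auto
  qed
  have last: "\<not> e (t2 - 1)"
  proof
    assume "e (t2 - 1)"
    then have "l t2 = l (t2 - 1)" "\<not> e t2"
      using flat_after[of "t2 - 1"] flip[of "t2 - 1"] far by auto
    then show False
      using t(4) marked[of t2] far by auto
  qed
  have alternating: "e (t1 + 1 + k) \<longleftrightarrow> even k" if "t1 + 1 + k < t2" for k
    using that by (induction k) (use start step in auto)
  have idx: "t1 + 1 + (t2 - t1 - 2) = t2 - 1"
    using far by simp
  have "odd (t2 - t1 - 2)"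
    using alternating[of "t2 - t1 - 2", unfolded idx] last far by simp
  then show ?thesis
    using far by presburger
qed simp

lemma removable_Y_iff:
  assumes "is_partition p"
  shows "removable (Y p) (t, j) \<longleftrightarrow> 1 \<le> t \<and> 1 \<le> j \<and> j = row_len p t \<and> row_len p (t + 1) < row_len p t"
  unfolding removable_iff[OF young_Y[OF assms]] mem_Y_iff by auto

lemma addable_Y_iff:
  assumes "is_partition p"
  shows "addable (Y p) (t, j) \<longleftrightarrow> 1 \<le> t \<and> j = row_len p t + 1 \<and> (t = 1 \<or> row_len p t < row_len p (t - 1))"
  unfolding addable_iff[OF young_Y[OF assms]] mem_Y_iff by auto

lemma row_has_corner_iff:
  assumes p: "is_partition p"
  shows "(\<exists>j. corner (Y p) (t, j) \<and> same_parity r (t, j)) \<longleftrightarrow>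
    (same_parity r (t, row_len p t) \<and> row_len p (t + 1) < row_len p t) \<or>
    (\<not> same_parity r (t, row_len p t) \<and> (t = 1 \<or> row_len p t < row_len p (t - 1)))"
    (is "_ \<longleftrightarrow> (?e \<and> ?drop_after) \<or> (\<not> ?e \<and> ?drop_before)")
proof
  assume "\<exists>j. corner (Y p) (t, j) \<and> same_parity r (t, j)"
  then show "(?e \<and> ?drop_after) \<or> (\<not> ?e \<and> ?drop_before)"
    unfolding corner_def removable_Y_iff[OF p] addable_Y_iff[OF p] by auto
next
  have "row_len p 0 = 0"
    by (simp add: row_len_def)
  then have t: "1 \<le> t" if "?drop_after \<or> ?drop_before"
    using that by (cases t) auto
  assume "(?e \<and> ?drop_after) \<or> (\<not> ?e \<and> ?drop_before)"
  then have "removable (Y p) (t, row_len p t) \<and> ?e \<or> addable (Y p) (t, row_len p t + 1) \<and> \<not> ?e"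
    unfolding removable_Y_iff[OF p] addable_Y_iff[OF p] using t by auto
  then show "\<exists>j. corner (Y p) (t, j) \<and> same_parity r (t, j)"
    unfolding corner_def by (metis add.commute plus_1_eq_Suc same_parity_Suc(2))
qed

lemma HCs_rows_odd_distance:
  assumes p: "in_P r p" and kappa: "kappa r p > 0"
    and c: "c \<in> HCs r p" "c' \<in> HCs r p" "fst c < fst c'"
    and between: "\<And>d. d \<in> HCs r p \<Longrightarrow> \<not> (fst c < fst d \<and> fst d < fst c')"
  shows "odd (fst c' - fst c)"
proof -
  have part: "is_partition p"
    using p by (simp add: in_P_def)
  have HCs: "HCs r p = {c. corner (Y p) c \<and> same_parity r c}"
    using HCs_eq_HC[OF p kappa] HC_eq[OF p]
    by (auto simp: addable_cells_def removable_cells_def corner_def)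
  define m where "m t \<longleftrightarrow> (\<exists>j. corner (Y p) (t, j) \<and> same_parity r (t, j))" for t
  have marked: "m t \<longleftrightarrow> (\<exists>d\<in>HCs r p. fst d = t)" for t
    unfolding m_def HCs by force
  show ?thesis
  proof (rule odd_distance_of_marked_rows[of "row_len p" "\<lambda>t. same_parity r (t, row_len p t)" m])
    show "\<And>t. m t \<longleftrightarrow> (same_parity r (t, row_len p t) \<and> row_len p (t + 1) < row_len p t) \<or>
        (\<not> same_parity r (t, row_len p t) \<and> (t = 1 \<or> row_len p t < row_len p (t - 1)))"
      unfolding m_def by (rule row_has_corner_iff[OF part])
    show "1 \<le> fst c"
      using c(1) by (auto simp: HCs_def)
    show "m (fst c)" "m (fst c')" "\<And>t. fst c < t \<Longrightarrow> t < fst c' \<Longrightarrow> \<not> m t"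
      using c between unfolding marked by auto
  qed (use c(3) row_len_antimono[OF part] in auto)
qed

section \<open>Nested matchings\<close>

definition consecutive :: "('a \<Rightarrow> 'k::linorder) \<Rightarrow> 'a set \<Rightarrow> 'a \<Rightarrow> 'a \<Rightarrow> bool" where
  "consecutive f X x y \<longleftrightarrow> x \<in> X \<and> y \<in> X \<and> f x < f y \<and> (\<forall>z\<in>X. \<not> (f x < f z \<and> f z < f y))"

definition nested_pair ::
    "('a \<Rightarrow> 'k::linorder) \<Rightarrow> ('a \<Rightarrow> bool) \<Rightarrow> 'a set \<Rightarrow> 'a set \<Rightarrow> 'a set set \<Rightarrow> 'a \<Rightarrow> 'a \<Rightarrow> bool" where
  "nested_pair f col X S M x y \<longleftrightarrow> f x < f y \<and> col x \<noteq> col y \<and> card ({x, y} \<inter> S) = 1 \<and>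
     (\<forall>z\<in>X. f x \<le> f z \<and> f z \<le> f y \<longrightarrow> (\<exists>w. w \<noteq> z \<and> {z, w} \<in> M \<and> f x \<le> f w \<and> f w \<le> f y))"

definition nested_matching ::
    "('a \<Rightarrow> 'k::linorder) \<Rightarrow> ('a \<Rightarrow> bool) \<Rightarrow> 'a set \<Rightarrow> 'a set \<Rightarrow> 'a set set \<Rightarrow> bool" where
  "nested_matching f col X S M \<longleftrightarrow> \<Union>M \<subseteq> X \<and> pairwise disjnt M \<and>
     (\<forall>P\<in>M. \<exists>x y. P = {x, y} \<and> nested_pair f col X S M x y)"

lemma nested_matchingE:
  assumes "nested_matching f col X S M" "P \<in> M"
  obtains x y where "P = {x, y}" "nested_pair f col X S M x y"
  using assms unfolding nested_matching_def by blast

lemma nested_matching_card_Int: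
  assumes "nested_matching f col X S M" "P \<in> M"
  shows "card (P \<inter> S) = 1"
proof -
  obtain x y where "P = {x, y}" "nested_pair f col X S M x y"
    by (rule nested_matchingE[OF assms])
  then show ?thesis
    by (simp add: nested_pair_def)
qed

lemma consecutive_mixed_exists:
  assumes "finite X" "inj_on f X" "s \<in> X" "s \<in> S" "u \<in> X" "u \<notin> S"
  shows "\<exists>x y. consecutive f X x y \<and> (x \<in> S \<longleftrightarrow> y \<notin> S)"
proof -
  define mixed where "mixed = (\<lambda>(x, y). x \<in> X \<and> y \<in> X \<and> f x < f y \<and> (x \<in> S \<longleftrightarrow> y \<notin> S))"
  define inside where "inside = (\<lambda>(x, y). {z \<in> X. f x < f z \<and> f z < f y})"
  have "f s \<noteq> f u"
    using assms by (metis inj_on_def)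
  then have "mixed (s, u) \<or> mixed (u, s)"
    using assms by (auto simp: mixed_def)
  then obtain x y where xy: "mixed (x, y)"
    and least: "\<And>a b. mixed (a, b) \<Longrightarrow> card (inside (x, y)) \<le> card (inside (a, b))"
    using ex_has_least_nat[of mixed _ "\<lambda>q. card (inside q)"] by fastforce
  have "consecutive f X x y"
    unfolding consecutive_def
  proof (intro conjI ballI notI)
    show "x \<in> X" "y \<in> X" "f x < f y"
      using xy by (auto simp: mixed_def)
    fix z
    assume z: "z \<in> X" "f x < f z \<and> f z < f y"
    have fin: "finite (inside (x, y))"
      using assms(1) by (simp add: inside_def)
    have "inside (x, z) \<subset> inside (x, y)" "inside (z, y) \<subset> inside (x, y)"
      using z by (auto simp: inside_def)
    then have "card (inside (x, z)) < card (inside (x, y))" "card (inside (z, y)) < card (inside (x, y))"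
      using fin by (auto intro: psubset_card_mono)
    moreover have "mixed (x, z) \<or> mixed (z, y)"
      using xy z by (auto simp: mixed_def)
    ultimately show False
      using least by fastforce
  qed
  then show ?thesis
    using xy by (auto simp: mixed_def)
qed

lemma consecutive_Diff_pair:
  assumes inj: "inj_on f X" and xy: "consecutive f X x y" and ab: "consecutive f (X - {x, y}) a b"
  shows "consecutive f X a b \<or> (consecutive f X a x \<and> consecutive f X y b)"
proof (cases "\<exists>z\<in>X. f a < f z \<and> f z < f b")
  case False
  then show ?thesis
    using ab by (auto simp: consecutive_def)
next
  case True
  have a: "a \<in> X" "a \<noteq> x" "a \<noteq> y" and b: "b \<in> X" "b \<noteq> x" "b \<noteq> y"
    using ab by (auto simp: consecutive_def)
  have x: "x \<in> X" "y \<in> X" "f x < f y" "\<forall>z\<in>X. \<not> (f x < f z \<and> f z < f y)"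
    using xy by (auto simp: consecutive_def)
  have "f a \<noteq> f x" "f a \<noteq> f y" "f b \<noteq> f x" "f b \<noteq> f y"
    using a b x inj by (metis inj_on_def)+
  moreover obtain z where "z \<in> {x, y}" "f a < f z" "f z < f b"
    using True ab by (auto simp: consecutive_def)
  ultimately have order: "f a < f x" "f y < f b"
    using x a b by (metis insertE empty_iff not_less_iff_gr_or_eq order.strict_trans)+
  have inside: "z \<in> {x, y}" if "z \<in> X" "f a < f z" "f z < f b" for z
    using ab that by (auto simp: consecutive_def)
  have "consecutive f X a x"
    unfolding consecutive_def
  proof (intro conjI ballI notI)
    fix z
    assume z: "z \<in> X" "f a < f z \<and> f z < f x"
    then have "z \<in> {x, y}"
      using inside order x(3) by (meson order.strict_trans)
    then show False
      using z x(3) by auto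
  qed (use a x order in auto)
  moreover have "consecutive f X y b"
    unfolding consecutive_def
  proof (intro conjI ballI notI)
    fix z
    assume z: "z \<in> X" "f y < f z \<and> f z < f b"
    then have "z \<in> {x, y}"
      using inside order x(3) by (meson order.strict_trans)
    then show False
      using z x(3) by auto
  qed (use b x order in auto)
  ultimately show ?thesis
    by blast
qed

lemma consecutive_colour_Diff_pair:
  fixes col :: "'a \<Rightarrow> bool"
  assumes "inj_on f X" "consecutive f X x y"
    and alternating: "\<And>a b. consecutive f X a b \<Longrightarrow> col a \<noteq> col b"
    and "consecutive f (X - {x, y}) a b"
  shows "col a \<noteq> col b"
  using consecutive_Diff_pair[OF assms(1,2,4)] alternating[OF assms(2)] alternating by blast

lemma nested_pair_consecutive:
  assumes inj: "inj_on f X" and xy: "consecutive f X x y" "col x \<noteq> col y" "x \<in> S \<longleftrightarrow> y \<notin> S"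
    and M: "{x, y} \<in> M"
  shows "nested_pair f col X S M x y"
  unfolding nested_pair_def
proof (intro conjI ballI impI)
  have x: "x \<in> X" "y \<in> X" "f x < f y" "\<forall>z\<in>X. \<not> (f x < f z \<and> f z < f y)"
    using xy(1) by (auto simp: consecutive_def)
  then show "f x < f y"
    by blast
  have "{x, y} \<inter> S = {x} \<or> {x, y} \<inter> S = {y}"
    using xy(3) by auto
  then show "card ({x, y} \<inter> S) = 1"
    by auto
  fix z
  assume z: "z \<in> X" "f x \<le> f z \<and> f z \<le> f y"
  then consider "z = x" | "z = y"
    using x inj by (metis inj_on_def order.not_eq_order_implies_strict)
  then show "\<exists>w. w \<noteq> z \<and> {z, w} \<in> M \<and> f x \<le> f w \<and> f w \<le> f y"
  proof cases
    case 1
    then show ?thesis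
      using x M by (intro exI[of _ y]) auto
  next
    case 2
    then show ?thesis
      using x M by (intro exI[of _ x]) (auto simp: insert_commute)
  qed
qed (use xy in auto)

text \<open>An interval of \<open>X - {x, y}\<close> containing \<open>x\<close> or \<open>y\<close> contains both, as they are consecutive.\<close>

lemma nested_pair_Diff_consecutive:
  assumes ab: "nested_pair f col (X - {x, y}) (S - {x, y}) M a b" "a \<in> X - {x, y}" "b \<in> X - {x, y}"
    and inj: "inj_on f X" and xy: "consecutive f X x y" and M: "M \<subseteq> M'" "{x, y} \<in> M'"
  shows "nested_pair f col X S M' a b"
proof -
  have x: "x \<in> X" "y \<in> X" "f x < f y" "\<forall>z\<in>X. \<not> (f x < f z \<and> f z < f y)"
    using xy by (auto simp: consecutive_def)
  have "{a, b} \<inter> S = {a, b} \<inter> (S - {x, y})"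
    using ab(2,3) by auto
  moreover have "\<exists>w. w \<noteq> z \<and> {z, w} \<in> M' \<and> f a \<le> f w \<and> f w \<le> f b"
    if z: "z \<in> X" "f a \<le> f z" "f z \<le> f b" for z
  proof (cases "z \<in> {x, y}")
    case True
    have ne: "f a \<noteq> f x" "f a \<noteq> f y" "f b \<noteq> f x" "f b \<noteq> f y"
      using ab(2,3) x inj by (metis DiffE insertCI inj_on_def)+
    have "f a \<le> f x" "f y \<le> f b"
      using True z x ab(2,3) ne by (auto simp: not_less[symmetric])
    moreover from this have "f a \<le> f y" "f x \<le> f b"
      using x(3) by auto
    ultimately show ?thesis
      using True x M(2) by (auto intro: exI[of _ x] exI[of _ y] simp: insert_commute)
  next
    case False
    then show ?thesis
      using ab(1) z M(1) unfolding nested_pair_def by blast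
  qed
  ultimately show ?thesis
    using ab(1) unfolding nested_pair_def by auto
qed

lemma nested_matching_insert:
  assumes M: "nested_matching f col (X - {x, y}) (S - {x, y}) M"
    and inj: "inj_on f X" and xy: "consecutive f X x y" "col x \<noteq> col y" "x \<in> S \<longleftrightarrow> y \<notin> S"
  shows "nested_matching f col X S (insert {x, y} M)"
  unfolding nested_matching_def
proof (intro conjI ballI)
  let ?M = "insert {x, y} M"
  have UM: "\<Union>M \<subseteq> X - {x, y}"
    using M by (simp add: nested_matching_def)
  then show "\<Union>?M \<subseteq> X"
    using xy(1) by (auto simp: consecutive_def)
  show "pairwise disjnt ?M"
    using M UM by (auto simp: nested_matching_def pairwise_insert disjnt_def)
  fix P
  assume "P \<in> ?M"
  then consider "P = {x, y}" | "P \<in> M"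
    by blast
  then show "\<exists>a b. P = {a, b} \<and> nested_pair f col X S ?M a b"
  proof cases
    case 1
    then show ?thesis
      using nested_pair_consecutive[OF inj xy] by blast
  next
    case 2
    obtain a b where ab: "P = {a, b}" "nested_pair f col (X - {x, y}) (S - {x, y}) M a b"
      by (rule nested_matchingE[OF M 2])
    moreover have "a \<in> X - {x, y}" "b \<in> X - {x, y}"
      using UM ab(1) 2 by blast+
    ultimately show ?thesis
      using nested_pair_Diff_consecutive[OF ab(2) _ _ inj xy(1)] by blast
  qed
qed

lemma nested_matching_exists:
  fixes col :: "'a \<Rightarrow> bool"
  assumes "finite X" "inj_on f X" "S \<subseteq> X" "2 * card S \<le> card X"
    and "\<And>x y. consecutive f X x y \<Longrightarrow> col x \<noteq> col y"
  shows "\<exists>M. nested_matching f col X S M \<and> card (X - \<Union>M) = card X - 2 * card S"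
  using assms
proof (induction "card S" arbitrary: X S)
  case 0
  then have "S = {}"
    using finite_subset by fastforce
  then show ?case
    by (intro exI[of _ "{}"]) (simp add: nested_matching_def)
next
  case (Suc n)
  have finS: "finite S"
    using Suc.prems finite_subset by blast
  obtain s where s: "s \<in> S"
    using Suc.hyps(2) by fastforce
  have "card S < card X"
    using Suc.hyps(2) Suc.prems(4) by simp
  then have "\<not> X \<subseteq> S"
    using card_mono[OF finS] by (meson not_le)
  then obtain u where u: "u \<in> X" "u \<notin> S"
    by blast
  obtain x y where xy: "consecutive f X x y" "x \<in> S \<longleftrightarrow> y \<notin> S"
    using consecutive_mixed_exists[OF Suc.prems(1,2) _ s u] s Suc.prems(3) by blast
  have x: "x \<in> X" "y \<in> X" "x \<noteq> y"
    using xy(1) by (auto simp: consecutive_def)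
  have "card (S \<inter> {x, y}) = 1"
    using xy(2) by (cases "x \<in> S") (auto simp: Int_insert_right x(3))
  then have cardS: "card (S - {x, y}) = n"
    using Suc.hyps(2) finS card_Diff_subset_Int[of S "{x, y}"] by simp
  have cardX: "card (X - {x, y}) = card X - 2"
    using x Suc.prems(1) by (simp add: card_Diff_subset)
  have "\<exists>M. nested_matching f col (X - {x, y}) (S - {x, y}) M \<and>
      card (X - {x, y} - \<Union>M) = card (X - {x, y}) - 2 * card (S - {x, y})"
  proof (rule Suc.hyps(1)[OF cardS[symmetric]])
    show "finite (X - {x, y})" "inj_on f (X - {x, y})" "S - {x, y} \<subseteq> X - {x, y}"
      using Suc.prems by (auto intro: inj_on_subset)
    show "2 * card (S - {x, y}) \<le> card (X - {x, y})"
      using Suc.hyps(2) Suc.prems(4) cardS cardX by simp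
    show "\<And>a b. consecutive f (X - {x, y}) a b \<Longrightarrow> col a \<noteq> col b"
      using consecutive_colour_Diff_pair[where col = col, OF Suc.prems(2) xy(1) Suc.prems(5)] .
  qed
  then obtain M where M: "nested_matching f col (X - {x, y}) (S - {x, y}) M"
      "card (X - {x, y} - \<Union>M) = card X - 2 * card S"
    using Suc.hyps(2) cardS cardX by auto
  have "nested_matching f col X S (insert {x, y} M)"
    using nested_matching_insert[OF M(1) Suc.prems(2) xy(1) Suc.prems(5)[OF xy(1)] xy(2)] .
  moreover have "X - \<Union>(insert {x, y} M) = X - {x, y} - \<Union>M"
    by auto
  ultimately show ?case
    using M(2) by metis
qed

lemma HCs_consecutive_rows_alternate:
  assumes p: "in_P r p" and kappa: "kappa r p > 0" and c: "consecutive fst (HCs r p) c c'"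
  shows "even (fst c) \<noteq> even (fst c')"
proof -
  have "odd (fst c' - fst c)" "fst c < fst c'"
    using HCs_rows_odd_distance[OF p kappa] c unfolding consecutive_def by blast+
  then show ?thesis
    by presburger
qed

lemma nested_matching_of_HCs:
  assumes p: "in_P r p" and kappa: "kappa r p > 0" and S: "S \<subseteq> HCs r p" "card S = kappa r p"
  shows "\<exists>M. nested_matching fst (\<lambda>c. even (fst c)) (HCs r p) S M \<and> card (HCs r p - \<Union>M) = gamma r p"
proof -
  have "\<exists>M. nested_matching fst (\<lambda>c. even (fst c)) (HCs r p) S M \<and>
      card (HCs r p - \<Union>M) = card (HCs r p) - 2 * card S"
  proof (rule nested_matching_exists)
    show "finite (HCs r p)" "inj_on fst (HCs r p)" "S \<subseteq> HCs r p"
      using finite_HCs[OF p] inj_on_fst_HCs[OF p] S(1) .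
    show "2 * card S \<le> card (HCs r p)"
      using card_HCs[OF p] S(2) by simp
    show "\<And>c c'. consecutive fst (HCs r p) c c' \<Longrightarrow> even (fst c) \<noteq> even (fst c')"
      using HCs_consecutive_rows_alternate[OF p kappa] .
  qed
  then show ?thesis
    using card_HCs[OF p] S(2) by simp
qed

lemma nested_pair_Hs_Cs:
  assumes "nested_pair fst (\<lambda>c. even (fst c)) (HCs r p) S M x y" "x \<in> HCs r p" "y \<in> HCs r p"
  shows "\<exists>a b. {x, y} = {a, b} \<and> a \<in> Hs r p \<and> b \<in> Cs r p"
proof (cases "even (fst x)")
  case True
  then show ?thesis
    using assms by (intro exI[of _ x] exI[of _ y]) (simp add: nested_pair_def Hs_def Cs_def)
next
  case False
  then show ?thesis
    using assms by (intro exI[of _ y] exI[of _ x]) (simp add: nested_pair_def Hs_def Cs_def insert_commute)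
qed

text \<open>The squares of \<open>HC*(p)\<close> between the ends of a pair are the ones in the rows between them,
  because the columns of \<open>HC*(p)\<close> decrease with the row.\<close>

lemma nested_pair_between:
  assumes p: "in_P r p" and M: "nested_matching fst (\<lambda>c. even (fst c)) (HCs r p) S M"
    and ab: "{a, b} \<in> M" and c: "c \<in> HCs r p" "between c a b"
  shows "\<exists>d. d \<noteq> c \<and> {c, d} \<in> M \<and> between d a b"
proof -
  have UM: "\<Union>M \<subseteq> HCs r p"
    using M by (simp add: nested_matching_def)
  obtain x y where xy: "{a, b} = {x, y}" "nested_pair fst (\<lambda>c. even (fst c)) (HCs r p) S M x y"
    by (rule nested_matchingE[OF M ab])
  then have x: "x \<in> HCs r p" "y \<in> HCs r p" "fst x < fst y"
    using UM ab by (auto simp: nested_pair_def)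
  moreover have "fst x \<le> fst c" "fst c \<le> fst y"
    using c(2) xy(1) x(3) by (auto simp: between_def doubleton_eq_iff)
  ultimately obtain w where w: "w \<noteq> c" "{c, w} \<in> M" "fst x \<le> fst w" "fst w \<le> fst y"
    using xy(2) c(1) unfolding nested_pair_def by blast
  then have "w \<in> HCs r p"
    using UM by blast
  then have "snd y \<le> snd w" "snd w \<le> snd x"
    using HCs_columns_antitone[OF p] w(3,4) x(1,2) by blast+
  then have "between w a b"
    using xy(1) w(3,4) by (auto simp: between_def doubleton_eq_iff)
  then show ?thesis
    using w by blast
qed

lemma cycle_structure_set_of_nested_matching:
  assumes p: "in_P r p" and M: "nested_matching fst (\<lambda>c. even (fst c)) (HCs r p) S M"
    and unmatched: "card (HCs r p - \<Union>M) = gamma r p"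
  shows "cycle_structure_set r p M"
  unfolding cycle_structure_set_def
proof (intro conjI allI impI ballI)
  show "\<exists>a b. P = {a, b} \<and> a \<in> Hs r p \<and> b \<in> Cs r p" if P: "P \<in> M" for P
  proof -
    obtain x y where "P = {x, y}" "nested_pair fst (\<lambda>c. even (fst c)) (HCs r p) S M x y"
      by (rule nested_matchingE[OF M P])
    moreover have "x \<in> HCs r p" "y \<in> HCs r p"
      using M P \<open>P = {x, y}\<close> by (auto simp: nested_matching_def)
    ultimately show ?thesis
      using nested_pair_Hs_Cs by blast
  qed
  show "P \<inter> Q = {}" if "P \<in> M" "Q \<in> M" "P \<noteq> Q" for P Q
    using M that unfolding nested_matching_def pairwise_def disjnt_def by blast
  show "card (HCs r p - \<Union>M) = gamma r p"
    by (fact unmatched)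
  show "\<exists>d. d \<noteq> c \<and> {c, d} \<in> M \<and> between d a b" if "{a, b} \<in> M" "c \<in> HCs r p" "between c a b"
    for a b c
    using nested_pair_between[OF p M that] .
qed

theorem mainTheorem2:
  fixes r :: nat and p :: "nat list" and S :: "square set"
  assumes "in_P r p"
    and "S \<subseteq> HCs r p"
    and "finite S"
    and "card S = kappa r p"
  shows "\<exists>\<sigma>. cycle_structure_set r p \<sigma> \<and> (\<forall>P\<in>\<sigma>. card (P \<inter> S) = 1)"
proof (cases "kappa r p = 0")
  case True
  then have "cycle_structure_set r p {}"
    using card_HCs[OF assms(1)] by (simp add: cycle_structure_set_def)
  then show ?thesis
    by blast
next
  case False
  then obtain M where "nested_matching fst (\<lambda>c. even (fst c)) (HCs r p) S M"
      "card (HCs r p - \<Union>M) = gamma r p"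
    using nested_matching_of_HCs[OF assms(1) _ assms(2,4)] by blast
  then show ?thesis
    using cycle_structure_set_of_nested_matching[OF assms(1)] nested_matching_card_Int by blast
qed

end
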